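(* Let $G=(V,E)$ be a finite, undirected, unweighted, 2-vertex-connected graph with $n=|V|$ vertices, and let $\gamma<3$ be a real number. Suppose $T$ is a minimum spanning tree of $G$ and $C_T$ is a cycle (closed walk) in $G$, not necessarily simple, whose vertex set contains every vertex of odd degree in $T$, and such that $\ell(C_T)\le(1+\gamma)|C_T|$. Then $G$ has a TSP tour of length at most $\frac{4n}{3-\gamma}$.
   Context: For a (not necessarily simple) cycle $C$, i.e. a closed walk in $G$ that may repeat vertices, $|C|$ denotes the number of distinct vertices of $C$ and $\ell(C)$ denotes the length of a traversal of $C$, i.e. the number of edges traversed counted with multiplicity. A TSP tour of $G$ is a closed walk in $G$ visiting every vertex at least once, with length the number of edges traversed counted with multiplicity. Since $G$ is unweighted, every spanning tree is a minimum spanning tree. *)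

theory Defs
  imports Complex_Main
begin

definition graph :: "'a set \<Rightarrow> 'a set set \<Rightarrow> bool" where
  "graph V E \<longleftrightarrow> finite V \<and> (\<forall>e\<in>E. e \<subseteq> V \<and> card e = 2)"

definition walk :: "'a set \<Rightarrow> 'a set set \<Rightarrow> 'a list \<Rightarrow> bool" where
  "walk V E xs \<longleftrightarrow> xs \<noteq> [] \<and> set xs \<subseteq> V \<and>
     (\<forall>i < length xs - 1. {xs ! i, xs ! Suc i} \<in> E)"

definition walk_length :: "'a list \<Rightarrow> nat" where
  "walk_length xs = length xs - 1"

definition closed_walk :: "'a set \<Rightarrow> 'a set set \<Rightarrow> 'a list \<Rightarrow> bool" where
  "closed_walk V E xs \<longleftrightarrow> walk V E xs \<and> hd xs = last xs"

definition connected_graph :: "'a set \<Rightarrow> 'a set set \<Rightarrow> bool" where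
  "connected_graph V E \<longleftrightarrow>
     (\<forall>u\<in>V. \<forall>v\<in>V. \<exists>xs. walk V E xs \<and> hd xs = u \<and> last xs = v)"

definition two_vertex_connected :: "'a set \<Rightarrow> 'a set set \<Rightarrow> bool" where
  "two_vertex_connected V E \<longleftrightarrow> card V \<ge> 3 \<and> connected_graph V E \<and>
     (\<forall>v\<in>V. connected_graph (V - {v}) {e\<in>E. v \<notin> e})"

definition acyclic_edges :: "'a set \<Rightarrow> 'a set set \<Rightarrow> bool" where
  "acyclic_edges V T \<longleftrightarrow>
     (\<forall>e\<in>T. \<forall>u v. e = {u, v} \<longrightarrow>
        \<not> (\<exists>xs. walk V (T - {e}) xs \<and> hd xs = u \<and> last xs = v))"

definition spanning_tree :: "'a set \<Rightarrow> 'a set set \<Rightarrow> 'a set set \<Rightarrow> bool" where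
  "spanning_tree V E T \<longleftrightarrow> T \<subseteq> E \<and> connected_graph V T \<and> acyclic_edges V T"

text \<open>Unweighted graph: every spanning tree is a minimum spanning tree.\<close>
definition minimum_spanning_tree :: "'a set \<Rightarrow> 'a set set \<Rightarrow> 'a set set \<Rightarrow> bool" where
  "minimum_spanning_tree V E T \<longleftrightarrow> spanning_tree V E T \<and>
     (\<forall>T'. spanning_tree V E T' \<longrightarrow> card T \<le> card T')"

definition degree :: "'a set set \<Rightarrow> 'a \<Rightarrow> nat" where
  "degree T v = card {e\<in>T. v \<in> e}"

definition tsp_tour :: "'a set \<Rightarrow> 'a set set \<Rightarrow> 'a list \<Rightarrow> bool" where
  "tsp_tour V E xs \<longleftrightarrow> closed_walk V E xs \<and> V \<subseteq> set xs"

end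

theory Submission
  imports Defs "HOL-Library.Multiset"
begin

text \<open>Write L for the length of C and k for its number of vertices, and compare two tours.
  The odd-degree vertices of T are even in number and lie on C; colouring the steps of C
  alternately, switching colour at one occurrence of each of them, gives two classes of
  steps, each of which has odd degree exactly at those vertices. The smaller class X has at most
  L/2 steps, and T together with X is a connected multigraph with all degrees even, so it has an
  Euler tour, of length at most n - 1 + L/2. Alternatively, C extended by a detour to each of the
  n - k missing vertices is a tour of length at most L + 2(n - k). Since L \<le> (1 + \<gamma>) k, the
  shorter of the two has length at most 4n/(3 - \<gamma>).\<close>

section \<open>Walks\<close>

fun walk_edges :: "'a list \<Rightarrow> 'a set set" where
  "walk_edges (x # y # xs) = insert {x, y} (walk_edges (y # xs))"
| "walk_edges _ = {}"

lemma walk_edges_Cons: "walk_edges (x # xs) = (if xs = [] then {} else insert {x, hd xs} (walk_edges xs))"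
  by (cases xs) auto

lemma walk_edges_append: "walk_edges (xs @ ys) = walk_edges xs \<union> walk_edges ys \<union>
   (if xs \<noteq> [] \<and> ys \<noteq> [] then {{last xs, hd ys}} else {})"
  by (induction xs) (auto simp: walk_edges_Cons)

lemma walk_edges_rev: "walk_edges (rev xs) = walk_edges xs"
proof (induction xs)
  case (Cons x xs)
  show ?case
  proof (cases "xs = []")
    case False
    have "{last (rev xs), x} = {x, hd xs}" using False by (simp add: last_rev insert_commute)
    then show ?thesis using Cons False by (simp add: walk_edges_append walk_edges_Cons)
  qed simp
qed simp

lemma walk_edges_subset: "e \<in> walk_edges xs \<Longrightarrow> e \<subseteq> set xs"
  by (induction xs rule: walk_edges.induct) auto

lemma walk_iff_walk_edges: "walk V E xs \<longleftrightarrow> xs \<noteq> [] \<and> set xs \<subseteq> V \<and> walk_edges xs \<subseteq> E"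
proof -
  have "(\<forall>i < length xs - 1. {xs ! i, xs ! Suc i} \<in> E) \<longleftrightarrow> walk_edges xs \<subseteq> E"
    by (induction xs rule: walk_edges.induct) (auto simp: All_less_Suc2)
  then show ?thesis unfolding walk_def by simp
qed

lemma walk_append_tl:
  assumes "walk V E xs" "walk V E ys" "last xs = hd ys"
  shows "walk V E (xs @ tl ys)" "set (xs @ tl ys) = set xs \<union> set ys"
    "walk_edges (xs @ tl ys) = walk_edges xs \<union> walk_edges ys"
    "walk_length (xs @ tl ys) = walk_length xs + walk_length ys"
    "hd (xs @ tl ys) = hd xs" "last (xs @ tl ys) = last ys"
proof -
  obtain y ys' where ys: "ys = y # ys'" using assms(2) by (cases ys) (auto simp: walk_def)
  have xs: "xs \<noteq> []" using assms(1) by (auto simp: walk_def)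
  show edges: "walk_edges (xs @ tl ys) = walk_edges xs \<union> walk_edges ys"
    using assms(3) ys xs by (auto simp: walk_edges_append walk_edges_Cons)
  show "walk V E (xs @ tl ys)" using assms xs ys edges by (auto simp: walk_iff_walk_edges)
  show "set (xs @ tl ys) = set xs \<union> set ys" using ys xs assms(3) by auto
  show "walk_length (xs @ tl ys) = walk_length xs + walk_length ys"
    using ys xs by (cases xs) (auto simp: walk_length_def)
  show "hd (xs @ tl ys) = hd xs" using xs by simp
  show "last (xs @ tl ys) = last ys" using xs ys assms(3) by (cases ys') auto
qed

lemma walk_rev: "walk V E xs \<Longrightarrow> walk V E (rev xs)"
  by (auto simp: walk_iff_walk_edges walk_edges_rev)

lemma walk_rev_between:
  assumes "walk V E xs" "hd xs = u" "last xs = v"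
  shows "walk V E (rev xs) \<and> hd (rev xs) = v \<and> last (rev xs) = u"
  using assms walk_rev[OF assms(1)] by (auto simp: walk_def hd_rev last_rev)

lemma walk_mono: "walk V E xs \<Longrightarrow> E \<subseteq> F \<Longrightarrow> walk V F xs"
  by (auto simp: walk_iff_walk_edges)

lemma walk_appendD:
  assumes "walk V E (xs @ ys)"
  shows "xs \<noteq> [] \<Longrightarrow> walk V E xs" "ys \<noteq> [] \<Longrightarrow> walk V E ys"
  using assms by (auto simp: walk_iff_walk_edges walk_edges_append)

lemma walk_exits_set:
  assumes "walk V E xs" "hd xs \<in> S" "last xs \<notin> S"
  shows "\<exists>u w. {u, w} \<in> walk_edges xs \<and> u \<in> S \<and> w \<notin> S"
  using assms
proof (induction xs rule: walk_edges.induct)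
  case (1 x y xs)
  show ?case
  proof (cases "y \<in> S")
    case True
    have "walk V E (y # xs)" using "1.prems"(1) by (auto simp: walk_iff_walk_edges)
    with 1 True show ?thesis by auto
  qed (use 1 in auto)
qed (auto simp: walk_def)

section \<open>Euler tours of multisets of walks\<close>

definition walk_ends :: "'a list \<Rightarrow> 'a \<Rightarrow> nat" where
  "walk_ends w v = of_bool (hd w = v) + of_bool (last w = v)"

text \<open>Reversals of walks and rotations of closed walks are equivalent in this sense.\<close>

definition walk_equiv :: "'a list \<Rightarrow> 'a list \<Rightarrow> bool" where
  "walk_equiv P P' \<longleftrightarrow> set P' = set P \<and> walk_edges P' = walk_edges P \<and>
     walk_length P' = walk_length P \<and> (\<forall>v. even (walk_ends P v + walk_ends P' v))"

lemma walk_equiv_rev: "xs \<noteq> [] \<Longrightarrow> walk_equiv xs (rev xs)"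
  by (auto simp: walk_equiv_def walk_edges_rev walk_length_def walk_ends_def hd_rev last_rev)

lemma closed_walk_rotate:
  assumes "closed_walk V E P" "a \<in> set P"
  shows "\<exists>P'. closed_walk V E P' \<and> hd P' = a \<and> walk_equiv P P'"
proof -
  have ends: "even (walk_ends P v + walk_ends P' v)" if "closed_walk V E P'" for P' v
    using assms(1) that by (simp add: closed_walk_def walk_ends_def)
  obtain xs ys where P: "P = xs @ a # ys" using assms(2) by (meson split_list)
  show ?thesis
  proof (cases "xs = []")
    case True
    then show ?thesis using assms(1) P ends[OF assms(1)] by (intro exI[of _ P]) (simp add: walk_equiv_def)
  next
    case False
    have w: "walk V E P" "hd P = last P" using assms(1) by (auto simp: closed_walk_def)
    have w1: "walk V E (a # ys)" using w P walk_appendD by blast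
    have w2: "walk V E (xs @ [a])" using w P walk_appendD(1)[of V E "xs @ [a]" ys] by auto
    have l: "last (a # ys) = hd (xs @ [a])" using w P False by (cases xs) auto
    note g = walk_append_tl[OF w1 w2 l]
    define P' where "P' = (a # ys) @ tl (xs @ [a])"
    have "walk_edges P' = walk_edges P"
      using g(3) P False by (auto simp: P'_def walk_edges_append)
    moreover have "set P' = set P" "walk_length P' = walk_length P"
      using g(2,4) P by (auto simp: P'_def walk_length_def)
    moreover have cP': "closed_walk V E P'" using g False by (simp add: P'_def closed_walk_def)
    ultimately show ?thesis using ends[OF cP'] by (intro exI[of _ P']) (simp add: walk_equiv_def P'_def)
  qed
qed

text \<open>In a multiset of walks, P and Q may be replaced by R without changing the vertices, the edges,
  the total length, or the parity of the number of walk ends at any vertex.\<close>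

definition walk_join :: "'a set \<Rightarrow> 'a set set \<Rightarrow> 'a list \<Rightarrow> 'a list \<Rightarrow> 'a list \<Rightarrow> bool" where
  "walk_join V E P Q R \<longleftrightarrow> walk V E R \<and> set R = set P \<union> set Q \<and>
     walk_edges R = walk_edges P \<union> walk_edges Q \<and> walk_length R = walk_length P + walk_length Q \<and>
     (\<forall>v. even (walk_ends P v + walk_ends Q v + walk_ends R v))"

lemma walk_join_append:
  assumes "walk V E P" "walk V E Q" "last P = hd Q"
  shows "walk_join V E P Q (P @ tl Q)"
  using walk_append_tl[OF assms] assms(3) by (simp add: walk_join_def walk_ends_def)

lemma walk_join_equiv:
  assumes "walk_join V E P' Q' R" "walk_equiv P P'" "walk_equiv Q Q'"
  shows "walk_join V E P Q R"
proof -
  have "even (walk_ends P v + walk_ends Q v + walk_ends R v)" for v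
  proof -
    have "even (walk_ends P' v + walk_ends Q' v + walk_ends R v)"
      "even (walk_ends P v + walk_ends P' v)" "even (walk_ends Q v + walk_ends Q' v)"
      using assms unfolding walk_join_def walk_equiv_def by blast+
    then show ?thesis by presburger
  qed
  then show ?thesis using assms unfolding walk_join_def walk_equiv_def by simp
qed

lemma closed_walks_join:
  assumes "closed_walk V E P" "closed_walk V E Q" "a \<in> set P" "a \<in> set Q"
  shows "\<exists>R. walk_join V E P Q R"
proof -
  obtain P' Q' where "closed_walk V E P'" "hd P' = a" "walk_equiv P P'"
    "closed_walk V E Q'" "hd Q' = a" "walk_equiv Q Q'"
    using closed_walk_rotate[OF assms(1,3)] closed_walk_rotate[OF assms(2,4)] by blast
  then have "walk_join V E P' Q' (P' @ tl Q')"
    by (intro walk_join_append) (auto simp: closed_walk_def)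
  then show ?thesis using walk_join_equiv \<open>walk_equiv P P'\<close> \<open>walk_equiv Q Q'\<close> by blast
qed

lemma open_walk_join:
  assumes "\<forall>w\<in>#M. walk V E w" "\<forall>v. even (\<Sum>w\<in>#M. walk_ends w v)" "P \<in># M" "hd P \<noteq> last P"
  shows "\<exists>Q R. Q \<in># M - {#P#} \<and> walk_join V E P Q R"
proof -
  define a where "a = last P"
  have M: "M = add_mset P (M - {#P#})" using assms(3) by simp
  have "even (\<Sum>w\<in>#M. walk_ends w a)" using assms(2) by blast
  then have "odd (\<Sum>w\<in>#M - {#P#}. walk_ends w a)"
    using assms(4) by (subst (asm) M) (simp add: walk_ends_def a_def)
  then have "\<exists>Q\<in>#M - {#P#}. walk_ends Q a \<noteq> 0"
    using sum_mset.neutral[of "image_mset (\<lambda>w. walk_ends w a) (M - {#P#})"] by fastforce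
  then obtain Q where Q: "Q \<in># M - {#P#}" "walk_ends Q a \<noteq> 0" by blast
  define Q' where "Q' = (if hd Q = a then Q else rev Q)"
  have wQ: "walk V E Q" using assms(1) Q(1) by (auto dest: in_diffD)
  have "walk_equiv Q Q'" using wQ walk_equiv_rev by (auto simp: Q'_def walk_def walk_equiv_def)
  moreover have "walk_join V E P Q' (P @ tl Q')"
    using Q(2) assms(1,3) wQ walk_rev
    by (intro walk_join_append) (auto simp: Q'_def walk_ends_def hd_rev a_def)
  moreover have "walk_equiv P P" by (simp add: walk_equiv_def walk_ends_def)
  ultimately show ?thesis using Q(1) walk_join_equiv by blast
qed

lemma walks_meet:
  assumes "\<forall>w\<in>#add_mset P M. walk V E w"
    and "connected_graph V (\<Union>w\<in>set_mset (add_mset P M). walk_edges w)" "M \<noteq> {#}"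
  shows "\<exists>Q\<in>#M. set P \<inter> set Q \<noteq> {}"
proof (rule ccontr)
  assume disjoint: "\<not> ?thesis"
  obtain Q where Q: "Q \<in># M" using assms(3) by blast
  have "P \<noteq> []" "Q \<noteq> []" "set P \<subseteq> V" "set Q \<subseteq> V" using assms(1) Q by (auto simp: walk_def)
  then have "hd P \<in> V" "hd Q \<in> V" "hd Q \<notin> set P" "hd P \<in> set P"
    using Q disjoint hd_in_set by blast+
  then obtain xs where xs: "walk V (\<Union>w\<in>set_mset (add_mset P M). walk_edges w) xs"
    "hd xs = hd P" "last xs = hd Q"
    using assms(2) unfolding connected_graph_def by blast
  then obtain u w where uw: "{u, w} \<in> walk_edges xs" "u \<in> set P" "w \<notin> set P"
    using walk_exits_set[OF xs(1), of "set P"] xs \<open>hd Q \<notin> set P\<close> \<open>hd P \<in> set P\<close> by auto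
  then have "{u, w} \<in> (\<Union>w\<in>set_mset (add_mset P M). walk_edges w)"
    using xs(1) unfolding walk_iff_walk_edges by blast
  then obtain W where W: "W \<in># add_mset P M" "{u, w} \<subseteq> set W"
    using walk_edges_subset by blast
  show False
  proof (cases "W = P")
    case False
    then have "W \<in># M" using W(1) by simp
    then show False using W(2) uw(2) disjoint by blast
  qed (use W uw in blast)
qed

text \<open>If some walk is open, another walk must end where it ends, by parity; if all walks are closed,
  connectivity makes two of them meet.\<close>

lemma exists_walk_join:
  assumes "\<forall>w\<in>#M. walk V E w" "\<forall>v. even (\<Sum>w\<in>#M. walk_ends w v)"
    and "connected_graph V (\<Union>w\<in>set_mset M. walk_edges w)" "size M \<ge> 2"
  shows "\<exists>P Q R. P \<in># M \<and> Q \<in># M - {#P#} \<and> walk_join V E P Q R"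
proof (cases "\<exists>P\<in>#M. hd P \<noteq> last P")
  case True
  then obtain P where "P \<in># M" "hd P \<noteq> last P" by blast
  then obtain Q R where "Q \<in># M - {#P#}" "walk_join V E P Q R" using open_walk_join[OF assms(1,2)] by blast
  then show ?thesis using \<open>P \<in># M\<close> by blast
next
  case False
  have "M \<noteq> {#}" using assms(4) by auto
  then obtain P where P: "P \<in># M" by blast
  have "size (M - {#P#}) \<noteq> 0" using assms(4) P by (simp add: size_Diff_singleton)
  then have "M - {#P#} \<noteq> {#}" by auto
  then obtain Q where Q: "Q \<in># M - {#P#}" "set P \<inter> set Q \<noteq> {}"
    using walks_meet[of P "M - {#P#}" V E, unfolded insert_DiffM[OF P], OF assms(1,3)] by blast
  then obtain a where a: "a \<in> set P" "a \<in> set Q" by blast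
  have "closed_walk V E P" "closed_walk V E Q"
    using False assms(1) P Q(1) by (auto simp: closed_walk_def dest: in_diffD)
  then obtain R where "walk_join V E P Q R" using closed_walks_join a by metis
  then show ?thesis using P Q(1) by (intro exI conjI)
qed

lemma closed_walk_of_even_walks:
  assumes "\<forall>w\<in>#M. walk V E w" "\<forall>v. even (\<Sum>w\<in>#M. walk_ends w v)"
    and "connected_graph V (\<Union>w\<in>set_mset M. walk_edges w)" "M \<noteq> {#}"
  shows "\<exists>W. closed_walk V E W \<and> set W = (\<Union>w\<in>set_mset M. set w)
     \<and> walk_length W = (\<Sum>w\<in>#M. walk_length w)"
  using assms
proof (induction "size M" arbitrary: M rule: less_induct)
  case less
  show ?case
  proof (cases "size M \<ge> 2")
    case False
    then have "size M = 1" using less.prems(4) by (cases M) (auto simp: not_less_eq_eq)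
    then obtain W where M: "M = {#W#}" using size_1_singleton_mset by blast
    have "even (walk_ends W (hd W))" using less.prems(2) M by auto
    then have "hd W = last W" by (auto simp: walk_ends_def split: if_splits)
    then show ?thesis using M less.prems(1) by (auto simp: closed_walk_def)
  next
    case True
    obtain P Q R where PQR: "P \<in># M" "Q \<in># M - {#P#}" "walk_join V E P Q R"
      using exists_walk_join[OF less.prems(1-3) True] by blast
    define M' where "M' = M - {#P#} - {#Q#}"
    have M: "M = add_mset P (add_mset Q M')"
      unfolding M'_def using insert_DiffM[OF PQR(1)] insert_DiffM[OF PQR(2)] by metis
    have R: "walk V E R" "set R = set P \<union> set Q" "walk_edges R = walk_edges P \<union> walk_edges Q"
      "walk_length R = walk_length P + walk_length Q"
      "\<And>v. even (walk_ends P v + walk_ends Q v + walk_ends R v)"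
      using PQR(3) by (auto simp: walk_join_def)
    have "even (\<Sum>w\<in>#add_mset R M'. walk_ends w v)" for v
      using less.prems(2) R(5)[of v] unfolding M by simp presburger
    moreover have "size (add_mset R M') < size M" by (simp add: M)
    ultimately show ?thesis
      using less.hyps[of "add_mset R M'"] less.prems(1,3) R unfolding M by (simp add: Un_assoc add.assoc)
  qed
qed

section \<open>Spanning trees\<close>

locale parent_tree =
  fixes V :: "'a set" and E :: "'a set set" and r :: 'a and par :: "'a \<Rightarrow> 'a" and rank :: "'a \<Rightarrow> nat"
  assumes root: "r \<in> V" and par_root: "par r = r"
    and par: "\<And>v. v \<in> V \<Longrightarrow> v \<noteq> r \<Longrightarrow> par v \<in> V \<and> {par v, v} \<in> E \<and> rank (par v) < rank v"
begin

definition tree_edges :: "'a set set" where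
  "tree_edges = (\<lambda>v. {v, par v}) ` (V - {r})"

lemma tree_edges_subset: "tree_edges \<subseteq> E"
  using par by (auto simp: tree_edges_def insert_commute)

lemma card_tree_edges: "finite V \<Longrightarrow> card tree_edges \<le> card V - 1"
  unfolding tree_edges_def using card_image_le[of "V - {r}" "\<lambda>v. {v, par v}"] root by simp

lemma walk_from_root: "v \<in> V \<Longrightarrow> \<exists>xs. walk V tree_edges xs \<and> hd xs = r \<and> last xs = v"
proof (induction "rank v" arbitrary: v rule: less_induct)
  case less
  show ?case
  proof (cases "v = r")
    case True then show ?thesis using less.prems by (intro exI[of _ "[v]"]) (simp add: walk_def)
  next
    case False
    note p = par[OF less.prems False]
    obtain xs where xs: "walk V tree_edges xs" "hd xs = r" "last xs = par v"
      using less.hyps[of "par v"] p by auto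
    have "{par v, v} \<in> tree_edges"
      unfolding tree_edges_def using less.prems False by (auto simp: insert_commute)
    then have "walk V tree_edges [par v, v]" using p less.prems by (auto simp: walk_iff_walk_edges)
    note g = walk_append_tl[OF xs(1) this]
    show ?thesis using g xs by (intro exI[of _ "xs @ tl [par v, v]"]) simp
  qed
qed

lemma connected_tree_edges: "connected_graph V tree_edges"
  unfolding connected_graph_def
proof (intro ballI)
  fix u v assume "u \<in> V" "v \<in> V"
  then obtain xs ys where xs: "walk V tree_edges xs" "hd xs = r" "last xs = u"
    and ys: "walk V tree_edges ys" "hd ys = r" "last ys = v"
    using walk_from_root by meson
  note rev_xs = walk_rev_between[OF xs]
  then have "last (rev xs) = hd ys" using ys(2) by simp
  note g = walk_append_tl[OF conjunct1[OF rev_xs] ys(1) this]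
  show "\<exists>xs. walk V tree_edges xs \<and> hd xs = u \<and> last xs = v"
    using g rev_xs ys(3) by (intro exI[of _ "rev xs @ tl ys"]) simp
qed

lemma rank_funpow_par: "y \<in> V \<Longrightarrow> (par ^^ k) y \<in> V \<and> rank ((par ^^ k) y) \<le> rank y"
proof (induction k)
  case (Suc k)
  then show ?case using par[of "(par ^^ k) y"] par_root by (cases "(par ^^ k) y = r") auto
qed simp

definition descendants :: "'a \<Rightarrow> 'a set" where
  "descendants z = {w. \<exists>k. (par ^^ k) w = z}"

lemma par_notin_descendants:
  assumes "z \<in> V" "z \<noteq> r"
  shows "par z \<notin> descendants z"
proof
  assume "par z \<in> descendants z"
  then obtain k where "(par ^^ k) (par z) = z" unfolding descendants_def by auto
  then show False using rank_funpow_par[of "par z" k] par[OF assms] by auto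
qed

lemma descendants_par_iff:
  assumes "{z', par z'} \<noteq> {z, par z}"
  shows "z' \<in> descendants z \<longleftrightarrow> par z' \<in> descendants z"
proof
  assume "z' \<in> descendants z"
  then obtain k where "(par ^^ k) z' = z" unfolding descendants_def by auto
  then show "par z' \<in> descendants z"
    using assms unfolding descendants_def by (cases k) (auto simp: funpow_Suc_right simp del: funpow.simps)
next
  assume "par z' \<in> descendants z"
  then obtain k where "(par ^^ k) (par z') = z" unfolding descendants_def by auto
  then have "(par ^^ Suc k) z' = z" by (simp add: funpow_Suc_right del: funpow.simps)
  then show "z' \<in> descendants z" unfolding descendants_def by blast
qed

text \<open>A walk from z to its parent avoiding the edge between them would have to leave the descendants
  of z, but every other tree edge lies inside or outside that set.\<close>

lemma acyclic_tree_edges: "acyclic_edges V tree_edges"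
  unfolding acyclic_edges_def
proof (intro ballI allI impI notI)
  fix e u v assume e: "e \<in> tree_edges" "e = {u, v}"
    and "\<exists>xs. walk V (tree_edges - {e}) xs \<and> hd xs = u \<and> last xs = v"
  then obtain xs where xs: "walk V (tree_edges - {e}) xs" "hd xs = u" "last xs = v" by blast
  obtain z where z: "z \<in> V" "z \<noteq> r" "e = {z, par z}" using e unfolding tree_edges_def by auto
  then have "(u = z \<and> v = par z) \<or> (u = par z \<and> v = z)" using e by (auto simp: doubleton_eq_iff)
  then obtain ys where ys: "walk V (tree_edges - {e}) ys" "hd ys = z" "last ys = par z"
  proof
    assume "u = z \<and> v = par z"
    then show thesis using that xs by simp
  next
    assume "u = par z \<and> v = z"
    then show thesis using walk_rev_between[OF xs] by (intro that[of "rev xs"]) auto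
  qed
  have "z \<in> descendants z" unfolding descendants_def by (auto intro: exI[of _ 0])
  then obtain x y where xy: "{x, y} \<in> walk_edges ys" "x \<in> descendants z" "y \<notin> descendants z"
    using walk_exits_set[OF ys(1), of "descendants z"] ys par_notin_descendants[OF z(1,2)] by auto
  then have "{x, y} \<in> tree_edges - {e}" using ys(1) by (auto simp: walk_iff_walk_edges)
  then obtain z' where z': "{x, y} = {z', par z'}" "{z', par z'} \<noteq> {z, par z}"
    unfolding tree_edges_def z(3) by blast
  then have "(x = z' \<and> y = par z') \<or> (x = par z' \<and> y = z')" by (auto simp: doubleton_eq_iff)
  then show False using descendants_par_iff[OF z'(2)] xy by auto
qed

lemma spanning_tree_edges: "spanning_tree V E tree_edges"
  using tree_edges_subset connected_tree_edges acyclic_tree_edges by (simp add: spanning_tree_def)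

end

definition walk_dist :: "'a set \<Rightarrow> 'a set set \<Rightarrow> 'a \<Rightarrow> 'a \<Rightarrow> nat" where
  "walk_dist V E r v = (LEAST k. \<exists>xs. walk V E xs \<and> hd xs = r \<and> last xs = v \<and> walk_length xs = k)"

lemma walk_dist_le:
  assumes "walk V E xs"
  shows "walk_dist V E (hd xs) (last xs) \<le> walk_length xs"
proof -
  have "\<exists>ys. walk V E ys \<and> hd ys = hd xs \<and> last ys = last xs \<and> walk_length ys = walk_length xs"
    using assms by blast
  then show ?thesis unfolding walk_dist_def by (rule Least_le)
qed

lemma shortest_walk:
  assumes "walk V E xs" "hd xs = r" "last xs = v"
  shows "\<exists>ys. walk V E ys \<and> hd ys = r \<and> last ys = v \<and> walk_length ys = walk_dist V E r v"
proof -
  have "\<exists>k ys. walk V E ys \<and> hd ys = r \<and> last ys = v \<and> walk_length ys = k" using assms by blast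
  from LeastI_ex[OF this] show ?thesis unfolding walk_dist_def .
qed

lemma walk_dist_closer_neighbour:
  assumes "walk V E xs" "hd xs = r" "last xs = v" "v \<noteq> r"
  shows "\<exists>u. u \<in> V \<and> {u, v} \<in> E \<and> walk_dist V E r u < walk_dist V E r v"
proof -
  obtain xs where xs: "walk V E xs" "hd xs = r" "last xs = v" "walk_length xs = walk_dist V E r v"
    using shortest_walk[OF assms(1-3)] by blast
  define ys where "ys = butlast xs"
  have "xs \<noteq> []" using xs by (auto simp: walk_def)
  then have xs_ys: "xs = ys @ [v]" using xs(3) unfolding ys_def by (metis append_butlast_last_id)
  have "ys \<noteq> []" using xs_ys xs(2,3) assms(4) by auto
  have ys: "walk V E ys" "hd ys = r"
    using walk_appendD(1)[of V E ys "[v]"] xs(1,2) xs_ys \<open>ys \<noteq> []\<close> by simp_all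
  have "{last ys, v} \<in> E" using xs(1) xs_ys \<open>ys \<noteq> []\<close> by (auto simp: walk_iff_walk_edges walk_edges_append)
  moreover have "walk_dist V E r (last ys) < walk_dist V E r v"
    using walk_dist_le[OF ys(1), unfolded ys(2)] xs(4) xs_ys \<open>ys \<noteq> []\<close> by (cases ys) (auto simp: walk_length_def)
  moreover have "last ys \<in> V" using ys(1) \<open>ys \<noteq> []\<close> by (auto simp: walk_def)
  ultimately show ?thesis by blast
qed

lemma connected_graph_parent_tree:
  assumes "connected_graph V E" "r \<in> V"
  obtains par where "parent_tree V E r par (walk_dist V E r)"
proof -
  have closer: "\<exists>u. u \<in> V \<and> {u, v} \<in> E \<and> walk_dist V E r u < walk_dist V E r v"
    if v: "v \<in> V" "v \<noteq> r" for v
  proof -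
    obtain xs where "walk V E xs" "hd xs = r" "last xs = v"
      using assms v unfolding connected_graph_def by meson
    from walk_dist_closer_neighbour[OF this v(2)] show ?thesis .
  qed
  define par where
    "par v = (if v = r then r else SOME u. u \<in> V \<and> {u, v} \<in> E \<and> walk_dist V E r u < walk_dist V E r v)"
    for v
  have "parent_tree V E r par (walk_dist V E r)"
  proof
    show "r \<in> V" "par r = r" using assms(2) by (simp_all add: par_def)
    fix v assume v: "v \<in> V" "v \<noteq> r"
    show "par v \<in> V \<and> {par v, v} \<in> E \<and> walk_dist V E r (par v) < walk_dist V E r v"
      using someI_ex[OF closer[OF v]] v(2) by (simp add: par_def)
  qed
  then show thesis using that by blast
qed

lemma minimum_spanning_tree_card_le:
  assumes "graph V E" "connected_graph V E" "minimum_spanning_tree V E T" "V \<noteq> {}"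
  shows "card T \<le> card V - 1"
proof -
  obtain r where r: "r \<in> V" using assms(4) by blast
  obtain par where "parent_tree V E r par (walk_dist V E r)"
    by (rule connected_graph_parent_tree[OF assms(2) r])
  then interpret parent_tree V E r par "walk_dist V E r" .
  have "card T \<le> card tree_edges"
    using assms(3) spanning_tree_edges by (simp add: minimum_spanning_tree_def)
  also have "\<dots> \<le> card V - 1" using assms(1) card_tree_edges by (simp add: graph_def)
  finally show ?thesis .
qed

section \<open>Parity-correcting sets of steps of a closed walk\<close>

lemma even_card_odd_degree:
  assumes "finite V" "finite T" "\<forall>e\<in>T. e \<subseteq> V \<and> card e = 2"
  shows "even (card {v\<in>V. odd (degree T v)})"
proof -
  have "(\<Sum>v\<in>V. degree T v) = (\<Sum>v\<in>V. \<Sum>e\<in>T. of_bool (v \<in> e))"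
    unfolding degree_def using assms(2) by (simp add: sum.If_cases Int_def)
  also have "\<dots> = (\<Sum>e\<in>T. \<Sum>v\<in>V. of_bool (v \<in> e))" by (rule sum.swap)
  also have "\<dots> = (\<Sum>e\<in>T. card e)"
  proof (rule sum.cong)
    fix e assume "e \<in> T"
    then have "{v\<in>V. v \<in> e} = e" using assms(3) by auto
    then show "(\<Sum>v\<in>V. of_bool (v \<in> e)) = card e"
      using assms(1) by (simp add: sum.If_cases Int_def)
  qed simp
  also have "\<dots> = 2 * card T" using assms(3) by simp
  finally have "even (\<Sum>v\<in>V. degree T v)" by simp
  then show ?thesis using even_sum_iff[OF assms(1), of "degree T"] by simp
qed

definition step_ends :: "(nat \<Rightarrow> 'a) \<Rightarrow> nat set \<Rightarrow> 'a \<Rightarrow> nat" where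
  "step_ends c X v = (\<Sum>i\<in>X. of_bool (c i = v) + of_bool (c (Suc i) = v))"

lemma step_ends_lessThan: "even (step_ends c {..<j} v + of_bool (c 0 = v) + of_bool (c j = v))"
  by (induction j) (auto simp: step_ends_def)

text \<open>The selected steps form paths from the first mark to the second, from the third to the fourth,
  and so on, so their ends have odd multiplicity exactly at the marks.\<close>

lemma step_ends_marked:
  fixes c :: "nat \<Rightarrow> 'a" and P :: "nat set"
  defines "t j \<equiv> odd (card (P \<inter> {..<j}))"
  shows "even (step_ends c {i. i < j \<and> t (Suc i)} v + card {p\<in>P. p < j \<and> c p = v} + of_bool (t j \<and> c j = v))"
proof (induction j)
  case (Suc j)
  have t_Suc: "t (Suc j) \<longleftrightarrow> t j \<noteq> (j \<in> P)"
  proof -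
    have "P \<inter> {..<Suc j} = (if j \<in> P then insert j (P \<inter> {..<j}) else P \<inter> {..<j})"
      by (auto simp: less_Suc_eq)
    then show ?thesis by (simp add: t_def)
  qed
  have steps: "{i. i < Suc j \<and> t (Suc i)} = {i. i < j \<and> t (Suc i)} \<union> (if t (Suc j) then {j} else {})"
    by (auto simp: less_Suc_eq)
  have marks: "{p\<in>P. p < Suc j \<and> c p = v} = {p\<in>P. p < j \<and> c p = v} \<union> (if j \<in> P \<and> c j = v then {j} else {})"
    by (auto simp: less_Suc_eq)
  have "step_ends c {i. i < Suc j \<and> t (Suc i)} v = step_ends c {i. i < j \<and> t (Suc i)} v
      + (if t (Suc j) then of_bool (c j = v) + of_bool (c (Suc j) = v) else 0)"
    unfolding steps step_ends_def by (simp add: sum.union_disjoint)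
  moreover have "card {p\<in>P. p < Suc j \<and> c p = v} = card {p\<in>P. p < j \<and> c p = v} + of_bool (j \<in> P \<and> c j = v)"
    unfolding marks by (simp add: card_insert_if)
  ultimately show ?case using Suc.IH t_Suc by (cases "j \<in> P"; cases "t j"; cases "c j = v"; cases "c (Suc j) = v") auto
qed (simp add: step_ends_def t_def)

lemma step_ends_complement:
  assumes "c 0 = c L" "X \<subseteq> {..<L}"
  shows "even (step_ends c ({..<L} - X) v + step_ends c X v)"
proof -
  have "step_ends c {..<L} v = step_ends c ({..<L} - X) v + step_ends c X v"
    unfolding step_ends_def by (rule sum.subset_diff[OF assms(2)]) simp
  then show ?thesis using step_ends_lessThan[of c L v] assms(1) by auto
qed

lemma closed_sequence_short_join:
  assumes "c 0 = c L" "S \<subseteq> c ` {..<L}" "even (card S)"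
  shows "\<exists>X \<subseteq> {..<L}. 2 * card X \<le> L \<and> (\<forall>v. even (step_ends c X v + of_bool (v \<in> S)))"
proof -
  have "\<forall>v\<in>S. \<exists>i. i < L \<and> c i = v" using assms(2) by blast
  then have "\<exists>f. \<forall>v\<in>S. f v < L \<and> c (f v) = v" by (rule bchoice)
  then obtain f where f: "\<forall>v\<in>S. f v < L \<and> c (f v) = v" by blast
  define P where "P = f ` S"
  have "finite S" using assms(2) finite_surj by blast
  have marks: "card {p\<in>P. p < L \<and> c p = v} = of_bool (v \<in> S)" for v
  proof -
    have "{p\<in>P. p < L \<and> c p = v} = (if v \<in> S then {f v} else {})" using f by (auto simp: P_def)
    then show ?thesis by simp
  qed
  have "inj_on f S" using f by (metis inj_onI)
  then have "even (card (P \<inter> {..<L}))"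
    using assms(3) f by (simp add: P_def card_image image_subset_iff Int_absorb2)
  then have X1: "even (step_ends c {i. i < L \<and> odd (card (P \<inter> {..<Suc i}))} v + of_bool (v \<in> S))" for v
    using step_ends_marked[where c=c and P=P and j=L and v=v] by (simp add: marks)
  define X1 where "X1 = {i. i < L \<and> odd (card (P \<inter> {..<Suc i}))}"
  define X0 where "X0 = {..<L} - X1"
  have "X1 \<subseteq> {..<L}" "X0 \<subseteq> {..<L}" "X0 \<union> X1 = {..<L}" "X0 \<inter> X1 = {}" by (auto simp: X0_def X1_def)
  have X0: "even (step_ends c X0 v + of_bool (v \<in> S))" for v
    using step_ends_complement[OF assms(1) \<open>X1 \<subseteq> {..<L}\<close>, of v] X1[of v]
    unfolding X0_def X1_def[symmetric] by (simp add: even_add)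
  have "finite X0" "finite X1" using \<open>X0 \<subseteq> {..<L}\<close> \<open>X1 \<subseteq> {..<L}\<close> finite_subset by blast+
  then have "card X0 + card X1 = L"
    using card_Un_disjoint[of X0 X1] \<open>X0 \<union> X1 = {..<L}\<close> \<open>X0 \<inter> X1 = {}\<close> by simp
  then consider "2 * card X1 \<le> L" | "2 * card X0 \<le> L" by linarith
  then show ?thesis
  proof cases
    case 1
    then show ?thesis using X1 \<open>X1 \<subseteq> {..<L}\<close> unfolding X1_def[symmetric] by blast
  next
    case 2
    then show ?thesis using X0 \<open>X0 \<subseteq> {..<L}\<close> by blast
  qed
qed

lemma closed_walk_short_join:
  assumes "closed_walk V E C" "S \<subseteq> set C" "even (card S)"
  shows "\<exists>X \<subseteq> {..<walk_length C}. 2 * card X \<le> walk_length C \<and>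
    (\<forall>v. even (step_ends (nth C) X v + of_bool (v \<in> S)))"
proof -
  define L where "L = walk_length C"
  have "C \<noteq> []" "hd C = last C" using assms(1) by (auto simp: closed_walk_def walk_def)
  then have len: "length C = Suc L" and closed: "C ! 0 = C ! L"
    by (auto simp: L_def walk_length_def hd_conv_nth last_conv_nth)
  have "S \<subseteq> nth C ` {..<L}"
  proof
    fix v assume "v \<in> S"
    then have "v \<in> set C" using assms(2) by blast
    then obtain j where j: "j \<le> L" "C ! j = v" using len by (metis in_set_conv_nth less_Suc_eq_le)
    show "v \<in> nth C ` {..<L}"
    proof (cases "j < L")
      case False
      have "L \<noteq> 0"
      proof
        assume "L = 0"
        then have "set C = {v}" using len j by (cases C) auto
        then have "S = {v}" using assms(2) \<open>v \<in> S\<close> by auto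
        then show False using assms(3) by simp
      qed
      then show ?thesis using False j closed by (auto intro: image_eqI[of _ _ 0])
    qed (use j in auto)
  qed
  then show ?thesis using closed_sequence_short_join[of "nth C" L S] closed assms(3) by (simp add: L_def)
qed

section \<open>Tours\<close>

definition edge_walk :: "'a set \<Rightarrow> 'a list" where
  "edge_walk e = (SOME xs. \<exists>a b. xs = [a, b] \<and> e = {a, b} \<and> a \<noteq> b)"

lemma edge_walk_pair:
  assumes "card e = 2"
  shows "\<exists>a b. edge_walk e = [a, b] \<and> e = {a, b} \<and> a \<noteq> b"
proof -
  obtain a b where "e = {a, b}" "a \<noteq> b" using assms by (auto simp: card_2_iff)
  then have "\<exists>xs a b. xs = [a, b] \<and> e = {a, b} \<and> a \<noteq> b" by blast
  then show ?thesis unfolding edge_walk_def by (rule someI_ex)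
qed

lemma edge_walk_simps:
  assumes "card e = 2"
  shows "set (edge_walk e) = e" "walk_edges (edge_walk e) = {e}" "walk_length (edge_walk e) = 1"
    "walk_ends (edge_walk e) v = of_bool (v \<in> e)"
  using edge_walk_pair[OF assms] by (auto simp: walk_length_def walk_ends_def)

lemma sum_mset_image_mset_set: "(\<Sum>x\<in>#image_mset g (mset_set A). f x) = (\<Sum>a\<in>A. f (g a))"
  by (simp add: sum_unfold_sum_mset image_mset.compositionality comp_def)

lemma walk_ends_edge_walks:
  assumes "finite T" "\<forall>e\<in>T. card e = 2"
  shows "(\<Sum>w\<in>#image_mset edge_walk (mset_set T). walk_ends w v) = degree T v"
proof -
  have "(\<Sum>w\<in>#image_mset edge_walk (mset_set T). walk_ends w v) = (\<Sum>e\<in>T. of_bool (v \<in> e))"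
    unfolding sum_mset_image_mset_set using assms(2) by (simp add: edge_walk_simps)
  also have "\<dots> = degree T v" unfolding degree_def using assms(1) by (simp add: sum.If_cases Int_def)
  finally show ?thesis .
qed

lemma walk_ends_step_walks:
  "finite X \<Longrightarrow> (\<Sum>w\<in>#image_mset (\<lambda>i. [c i, c (Suc i)]) (mset_set X). walk_ends w v) = step_ends c X v"
  by (simp add: sum_mset_image_mset_set walk_ends_def step_ends_def)

lemma walk_edge_walk: "e \<in> E \<Longrightarrow> e \<subseteq> V \<Longrightarrow> card e = 2 \<Longrightarrow> walk V E (edge_walk e)"
  using edge_walk_pair[of e] by (auto simp: walk_iff_walk_edges)

lemma walk_step: "walk V E C \<Longrightarrow> i < walk_length C \<Longrightarrow> walk V E [C ! i, C ! Suc i]"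
  by (auto simp: walk_def walk_length_def)

lemma connected_graph_vertex_in_edge:
  assumes "connected_graph V T" "2 \<le> card V" "v \<in> V"
  shows "\<exists>e\<in>T. v \<in> e"
proof -
  have "finite V" using assms(2) card.infinite by fastforce
  then have "\<exists>u\<in>V. u \<noteq> v" using assms(2,3) card_le_Suc0_iff_eq[of V] by (metis not_less_eq_eq numeral_2_eq_2)
  then obtain u where u: "u \<in> V" "u \<noteq> v" by blast
  obtain xs where xs: "walk V T xs" "hd xs = v" "last xs = u"
    using assms(1,3) u(1) unfolding connected_graph_def by blast
  then obtain y ys where "xs = v # y # ys"
    using u(2) by (cases xs rule: walk_edges.cases) (auto simp: walk_def)
  then show ?thesis using xs(1) by (auto simp: walk_iff_walk_edges)
qed

lemma graph_finite_edges: "graph V E \<Longrightarrow> finite E"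
  unfolding graph_def by (meson PowI finite_Pow_iff finite_subset subsetI)

lemma tour_of_tree_and_join:
  assumes "graph V E" "2 \<le> card V" "spanning_tree V E T" "closed_walk V E C"
    and "X \<subseteq> {..<walk_length C}" "\<forall>v. even (degree T v + step_ends (nth C) X v)"
  shows "\<exists>W. tsp_tour V E W \<and> walk_length W = card T + card X"
proof -
  have TE: "T \<subseteq> E" and conn: "connected_graph V T" using assms(3) by (auto simp: spanning_tree_def)
  have T: "\<forall>e\<in>T. e \<subseteq> V \<and> card e = 2" using TE assms(1) by (auto simp: graph_def)
  have "finite T" using TE graph_finite_edges[OF assms(1)] finite_subset by blast
  have "finite X" using assms(5) finite_subset by blast
  define M where "M = image_mset edge_walk (mset_set T) + image_mset (\<lambda>i. [C ! i, C ! Suc i]) (mset_set X)"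
  have "walk V E (edge_walk e)" if "e \<in> T" for e using that T TE by (intro walk_edge_walk) auto
  moreover have "walk V E [C ! i, C ! Suc i]" if "i \<in> X" for i
  proof (rule walk_step)
    show "walk V E C" using assms(4) by (simp add: closed_walk_def)
    show "i < walk_length C" using that assms(5) by auto
  qed
  ultimately have walks: "\<forall>w\<in>#M. walk V E w" using \<open>finite T\<close> \<open>finite X\<close> by (auto simp: M_def)
  have "(\<Sum>w\<in>#M. walk_ends w v) = degree T v + step_ends (nth C) X v" for v
    using T \<open>finite T\<close> \<open>finite X\<close> by (simp add: M_def walk_ends_edge_walks walk_ends_step_walks)
  then have even: "\<forall>v. even (\<Sum>w\<in>#M. walk_ends w v)" using assms(6) by simp
  have "T \<subseteq> (\<Union>w\<in>set_mset M. walk_edges w)"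
  proof
    fix e assume "e \<in> T"
    then have "edge_walk e \<in># M" "walk_edges (edge_walk e) = {e}"
      using \<open>finite T\<close> T by (simp_all add: M_def edge_walk_simps)
    then show "e \<in> (\<Union>w\<in>set_mset M. walk_edges w)" by blast
  qed
  then have "connected_graph V (\<Union>w\<in>set_mset M. walk_edges w)"
    using conn walk_mono unfolding connected_graph_def by meson
  moreover have cover: "V \<subseteq> (\<Union>w\<in>set_mset M. set w)"
  proof
    fix v assume "v \<in> V"
    then obtain e where "e \<in> T" "v \<in> e" using connected_graph_vertex_in_edge[OF conn assms(2)] by blast
    then have "edge_walk e \<in># M" "v \<in> set (edge_walk e)"
      using \<open>finite T\<close> T by (simp_all add: M_def edge_walk_simps)
    then show "v \<in> (\<Union>w\<in>set_mset M. set w)" by blast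
  qed
  moreover have "M \<noteq> {#}" using cover assms(2) by (auto simp: card_gt_0_iff)
  ultimately obtain W where W: "closed_walk V E W" "set W = (\<Union>w\<in>set_mset M. set w)"
      "walk_length W = (\<Sum>w\<in>#M. walk_length w)"
    using closed_walk_of_even_walks[OF walks even] by blast
  have "(\<Sum>w\<in>#M. walk_length w) = card T + card X"
  proof -
    have "(\<Sum>e\<in>T. walk_length (edge_walk e)) = card T" using T by (simp add: edge_walk_simps)
    then show ?thesis by (simp add: M_def sum_mset_image_mset_set walk_length_def)
  qed
  then show ?thesis using W cover by (intro exI[of _ W]) (simp add: tsp_tour_def)
qed

lemma tour_of_tree_and_closed_walk:
  assumes "graph V E" "2 \<le> card V" "spanning_tree V E T" "closed_walk V E C"
    and "{v\<in>V. odd (degree T v)} \<subseteq> set C"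
  shows "\<exists>W. tsp_tour V E W \<and> 2 * walk_length W \<le> 2 * card T + walk_length C"
proof -
  define S where "S = {v\<in>V. odd (degree T v)}"
  have TE: "T \<subseteq> E" using assms(3) by (simp add: spanning_tree_def)
  have T: "\<forall>e\<in>T. e \<subseteq> V \<and> card e = 2" using TE assms(1) by (auto simp: graph_def)
  have "finite V" "finite T" using assms(1) graph_finite_edges[OF assms(1)] TE finite_subset
    by (auto simp: graph_def)
  then have "even (card S)" unfolding S_def using even_card_odd_degree[OF _ _ T] by blast
  then obtain X where X: "X \<subseteq> {..<walk_length C}" "2 * card X \<le> walk_length C"
    "\<forall>v. even (step_ends (nth C) X v + of_bool (v \<in> S))"
    using closed_walk_short_join[OF assms(4), of S] assms(5) by (auto simp: S_def)
  have "even (degree T v + step_ends (nth C) X v)" for v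
  proof (cases "v \<in> V")
    case True
    then have "odd (degree T v) \<longleftrightarrow> v \<in> S" by (simp add: S_def)
    moreover have "even (step_ends (nth C) X v + of_bool (v \<in> S))" using X(3) by blast
    ultimately show ?thesis by (cases "v \<in> S") (simp_all add: even_add)
  next
    case False
    then have "degree T v = 0" using T \<open>finite T\<close> by (auto simp: degree_def)
    then show ?thesis using X(3) False by (simp add: S_def)
  qed
  then obtain W where "tsp_tour V E W" "walk_length W = card T + card X"
    using tour_of_tree_and_join[OF assms(1-4) X(1)] by blast
  then show ?thesis using X(2) by (intro exI[of _ W]) simp
qed

lemma closed_walk_extend_to_tour:
  assumes "closed_walk V E W" "connected_graph V E" "finite V"
  shows "\<exists>W'. tsp_tour V E W' \<and> walk_length W' \<le> walk_length W + 2 * card (V - set W)"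
  using assms
proof (induction "card (V - set W)" arbitrary: W rule: less_induct)
  case less
  show ?case
  proof (cases "V \<subseteq> set W")
    case True then show ?thesis using less.prems by (auto simp: tsp_tour_def)
  next
    case False
    then obtain x where x: "x \<in> V" "x \<notin> set W" by auto
    have W: "walk V E W" "hd W = last W" using less.prems(1) by (auto simp: closed_walk_def)
    then have "hd W \<in> V" "hd W \<in> set W" by (auto simp: walk_def)
    then obtain xs where xs: "walk V E xs" "hd xs = hd W" "last xs = x"
      using less.prems(2) x unfolding connected_graph_def by blast
    then obtain u w where uw: "{u, w} \<in> walk_edges xs" "u \<in> set W" "w \<notin> set W"
      using walk_exits_set[OF xs(1), of "set W"] \<open>hd W \<in> set W\<close> x by auto
    have "{u, w} \<in> E" "w \<in> V" using uw xs(1) walk_edges_subset[OF uw(1)] by (auto simp: walk_iff_walk_edges)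
    obtain ys zs where W_split: "W = ys @ u # zs" using uw(2) by (meson split_list)
    define W' where "W' = ys @ u # w # u # zs"
    have "walk_edges W' = insert {u, w} (walk_edges W)"
      using W_split by (auto simp: W'_def walk_edges_append walk_edges_Cons insert_commute)
    then have "closed_walk V E W'" using W W_split \<open>{u, w} \<in> E\<close> \<open>w \<in> V\<close>
      by (cases ys; cases zs) (auto simp: walk_iff_walk_edges closed_walk_def W'_def)
    moreover have "card (V - set W) = Suc (card (V - set W'))"
    proof -
      have "V - set W = insert w (V - set W')" "w \<notin> V - set W'"
        using W_split uw \<open>w \<in> V\<close> by (auto simp: W'_def)
      then show ?thesis using less.prems(3) by simp
    qed
    moreover have "walk_length W' = walk_length W + 2" using W_split by (simp add: W'_def walk_length_def)
    ultimately show ?thesis using less.hyps[of W'] less.prems(2,3) by fastforce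
  qed
qed

lemma min_le_tour_bound:
  fixes n k L a b g :: real
  assumes "g < 3" "1 \<le> k" "k \<le> n" "0 \<le> L" "L \<le> (1 + g) * k"
    and "2 * a \<le> 2 * n + L" "b \<le> L + 2 * n - 2 * k"
  shows "min a b \<le> 4 * n / (3 - g)"
proof -
  have "0 \<le> (1 + g) * k" using assms(4,5) by linarith
  then have "0 \<le> 1 + g" using assms(2) by (simp add: zero_le_mult_iff)
  have "min a b \<le> a" "min a b \<le> b" by simp_all
  have "(3 - g) * min a b \<le> 4 * n"
  proof (cases "g \<le> 1")
    case True
    text \<open>A convex combination of the two bounds in which L cancels.\<close>
    have "(3 - g) * min a b = (1 - g) * (2 * min a b) + (1 + g) * min a b" by algebra
    also have "\<dots> \<le> (1 - g) * (2 * n + L) + (1 + g) * (L + 2 * n - 2 * k)"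
    proof (rule add_mono)
      show "(1 - g) * (2 * min a b) \<le> (1 - g) * (2 * n + L)"
        using True \<open>min a b \<le> a\<close> assms(6) by (intro mult_left_mono) auto
      show "(1 + g) * min a b \<le> (1 + g) * (L + 2 * n - 2 * k)"
        using \<open>0 \<le> 1 + g\<close> \<open>min a b \<le> b\<close> assms(7) by (intro mult_left_mono) auto
    qed
    also have "\<dots> = 4 * n + 2 * (L - (1 + g) * k)" by algebra
    also have "\<dots> \<le> 4 * n" using assms(5) by simp
    finally show ?thesis .
  next
    case False
    have "L \<le> (1 + g) * n" using assms(3,5) \<open>0 \<le> 1 + g\<close> by (meson mult_left_mono order_trans)
    then have "min a b \<le> (3 + g) * n / 2" using \<open>min a b \<le> a\<close> assms(6) by (simp add: algebra_simps)
    then have "(3 - g) * min a b \<le> (3 - g) * ((3 + g) * n / 2)"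
      using assms(1) by (intro mult_left_mono) auto
    also have "\<dots> = 4 * n - (g * g - 1) * n / 2" by algebra
    also have "\<dots> \<le> 4 * n"
    proof -
      have "1 * 1 \<le> g * g" using False by (intro mult_mono) auto
      then show ?thesis using assms(2,3) by simp
    qed
    finally show ?thesis .
  qed
  moreover have "0 < 3 - g" using assms(1) by simp
  ultimately show ?thesis by (simp add: pos_le_divide_eq algebra_simps)
qed

theorem theorem9:
  fixes V :: "'a set" and E :: "'a set set" and T :: "'a set set"
    and C :: "'a list" and \<gamma> :: real
  assumes "graph V E"
    and "two_vertex_connected V E"
    and "\<gamma> < 3"
    and "minimum_spanning_tree V E T"
    and "closed_walk V E C"
    and "{v\<in>V. odd (degree T v)} \<subseteq> set C"
    and "real (walk_length C) \<le> (1 + \<gamma>) * real (card (set C))"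
  shows "\<exists>W. tsp_tour V E W \<and> real (walk_length W) \<le> 4 * real (card V) / (3 - \<gamma>)"
proof -
  have "finite V" using assms(1) by (simp add: graph_def)
  have conn: "connected_graph V E" and "3 \<le> card V" using assms(2) by (auto simp: two_vertex_connected_def)
  have tree: "spanning_tree V E T" using assms(4) by (simp add: minimum_spanning_tree_def)
  have "V \<noteq> {}" using \<open>3 \<le> card V\<close> by auto
  then have "card T \<le> card V - 1" by (rule minimum_spanning_tree_card_le[OF assms(1) conn assms(4)])
  obtain W1 where W1: "tsp_tour V E W1" "2 * walk_length W1 \<le> 2 * card T + walk_length C"
    using tour_of_tree_and_closed_walk[OF assms(1) _ tree assms(5,6)] \<open>3 \<le> card V\<close> by auto
  obtain W2 where W2: "tsp_tour V E W2" "walk_length W2 \<le> walk_length C + 2 * card (V - set C)"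
    using closed_walk_extend_to_tour[OF assms(5) conn \<open>finite V\<close>] by blast
  have "set C \<subseteq> V" "C \<noteq> []" using assms(5) by (auto simp: closed_walk_def walk_def)
  then have "1 \<le> card (set C)" "card (set C) \<le> card V" "card (V - set C) = card V - card (set C)"
    using \<open>finite V\<close> by (auto simp: Suc_le_eq card_gt_0_iff card_mono card_Diff_subset finite_subset)
  then have "min (real (walk_length W1)) (real (walk_length W2)) \<le> 4 * real (card V) / (3 - \<gamma>)"
    using W1(2) W2(2) \<open>card T \<le> card V - 1\<close> \<open>3 \<le> card V\<close> assms(3,7)
    by (intro min_le_tour_bound[where k = "real (card (set C))" and L = "real (walk_length C)"]) auto
  then show ?thesis using W1(1) W2(1) by (cases "walk_length W1 \<le> walk_length W2") auto
qed

end
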